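(* Let $\alpha,\beta,\gamma\in\mathbb{F}\setminus\{\frac12\}$, and let $\mathbf{A}$ be the 5-dimensional LV algebra with natural basis $e_1,\dots,e_5$ in which $e_1e_2=\alpha e_1+(1-\alpha)e_2$, $e_1e_5=\gamma e_1+(1-\gamma)e_5$, $e_2e_5=\beta e_2+(1-\beta)e_5$, and $e_ie_j=\frac12(e_i+e_j)$ for all other pairs $i,j$. Then $\mathrm{Der}(\mathbf{A})=\{f\in L(\mathbf{A}) : \mathrm{Im}(f)\subseteq\langle e_3-e_4\rangle \text{ and } f(e_1)=f(e_2)=f(e_5)\}$.
   Context: Let $\mathbb{F}$ be a field of characteristic different from $2$. A Lotka–Volterra (LV) algebra of dimension $5$ over $\mathbb{F}$ is a commutative (not necessarily associative) $\mathbb{F}$-algebra $\mathbf{A}$ with a basis $e_1,\dots,e_5$ (the natural basis) such that $e_ie_j=\alpha_{ij}e_i+\alpha_{ji}e_j$ with $\alpha_{ij}\in\mathbb{F}$, $\alpha_{ii}=\frac12$ and $\alpha_{ij}+\alpha_{ji}=1$ for all $i,j$. A derivation is a linear map $D:\mathbf{A}\to\mathbf{A}$ with $D(uv)=D(u)v+uD(v)$ for all $u,v$; $\mathrm{Der}(\mathbf{A})$ is the set of derivations, $L(\mathbf{A})$ the set of linear maps $\mathbf{A}\to\mathbf{A}$, and $\langle x_1,\dots,x_k\rangle$ the linear span. *)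

theory Defs
  imports Main
begin

text \<open>Vectors of the 5-dimensional algebra are represented as functions
  nat => 'a supported on the index set {1..5}; e k is the k-th natural basis vector.\<close>

definition LV_space :: "(nat \<Rightarrow> 'a::field) set" where
  "LV_space = {u. \<forall>k. k \<notin> {1..5} \<longrightarrow> u k = 0}"

definition ebasis :: "nat \<Rightarrow> nat \<Rightarrow> 'a::field" where
  "ebasis k = (\<lambda>i. if i = k then 1 else 0)"

definition vscale :: "'a::field \<Rightarrow> (nat \<Rightarrow> 'a) \<Rightarrow> nat \<Rightarrow> 'a" where
  "vscale c u = (\<lambda>i. c * u i)"

definition vadd :: "(nat \<Rightarrow> 'a::field) \<Rightarrow> (nat \<Rightarrow> 'a) \<Rightarrow> nat \<Rightarrow> 'a" where
  "vadd u v = (\<lambda>i. u i + v i)"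

definition vsub :: "(nat \<Rightarrow> 'a::field) \<Rightarrow> (nat \<Rightarrow> 'a) \<Rightarrow> nat \<Rightarrow> 'a" where
  "vsub u v = (\<lambda>i. u i - v i)"

text \<open>Structure constants: a i j is alpha_ij, so that e_i e_j = alpha_ij e_i + alpha_ji e_j.\<close>
definition is_LV_constants :: "(nat \<Rightarrow> nat \<Rightarrow> 'a::field) \<Rightarrow> bool" where
  "is_LV_constants a \<longleftrightarrow> (\<forall>i\<in>{1..5}. \<forall>j\<in>{1..5}. a i i = 1/2 \<and> a i j + a j i = 1)"

text \<open>Bilinear extension of e_i e_j = a i j e_i + a j i e_j.\<close>
definition LV_mult :: "(nat \<Rightarrow> nat \<Rightarrow> 'a::field) \<Rightarrow> (nat \<Rightarrow> 'a) \<Rightarrow> (nat \<Rightarrow> 'a) \<Rightarrow> nat \<Rightarrow> 'a" where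
  "LV_mult a u v = (\<lambda>k. if k \<in> {1..5}
      then (\<Sum>i\<in>{1..5}. \<Sum>j\<in>{1..5}. u i * v j *
              ((if k = i then a i j else 0) + (if k = j then a j i else 0)))
      else 0)"

definition LV_linear :: "((nat \<Rightarrow> 'a::field) \<Rightarrow> (nat \<Rightarrow> 'a)) \<Rightarrow> bool" where
  "LV_linear f \<longleftrightarrow> (\<forall>u\<in>LV_space. f u \<in> LV_space)
     \<and> (\<forall>u\<in>LV_space. \<forall>v\<in>LV_space. f (vadd u v) = vadd (f u) (f v))
     \<and> (\<forall>c. \<forall>u\<in>LV_space. f (vscale c u) = vscale c (f u))"

definition LV_Der :: "(nat \<Rightarrow> nat \<Rightarrow> 'a::field) \<Rightarrow> ((nat \<Rightarrow> 'a) \<Rightarrow> (nat \<Rightarrow> 'a)) set" where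
  "LV_Der a = {f. LV_linear f \<and> (\<forall>u\<in>LV_space. \<forall>v\<in>LV_space.
       f (LV_mult a u v) = vadd (LV_mult a (f u) v) (LV_mult a u (f v)))}"

definition thm6_consts :: "'a::field \<Rightarrow> 'a \<Rightarrow> 'a \<Rightarrow> nat \<Rightarrow> nat \<Rightarrow> 'a" where
  "thm6_consts \<alpha> \<beta> \<gamma> i j =
     (if (i, j) = (1, 2) then \<alpha> else if (i, j) = (2, 1) then 1 - \<alpha>
      else if (i, j) = (1, 5) then \<gamma> else if (i, j) = (5, 1) then 1 - \<gamma>
      else if (i, j) = (2, 5) then \<beta> else if (i, j) = (5, 2) then 1 - \<beta>
      else 1/2)"

end

theory Submission
  imports Defs
begin

text \<open>
  Comparing coordinates in D(e_i e_j) = D(e_i) e_j + e_i D(e_j) gives a linear system for the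
  entries of the vectors D(e_i). The indices 3 and 4 are neutral (e_3 e_j = (e_3 + e_j)/2 for
  all j, likewise for e_4), and the constants \<alpha>, \<beta>, \<gamma> \<noteq> 1/2 only couple e_1, e_2, e_5; the system
  then forces every D(e_j) onto the line through e_3 - e_4, with a common coefficient for
  e_1, e_2, e_5.

  Conversely, for neutral p, q the vector w = e_p - e_q satisfies u w = (\<sigma>(u)/2) w, where \<sigma> is
  the coordinate sum. Hence u \<mapsto> \<phi>(u) w is a derivation whenever the linear form \<phi> satisfies
  \<phi>(e_i e_j) = (\<phi>(e_i) + \<phi>(e_j))/2, and this holds as soon as \<phi>(e_i) = \<phi>(e_j) for every pair with
  \<alpha>_ij \<noteq> 1/2.
\<close>

lemma atLeastAtMost_1_5: "{1..5::nat} = {1,2,3,4,5}"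
  by auto

lemma sum_1_5: "(\<Sum>j\<in>{1..5::nat}. g j) = g 1 + g 2 + g 3 + g 4 + g 5"
  unfolding atLeastAtMost_1_5 by (simp add: add.assoc)

definition coord_sum :: "(nat \<Rightarrow> 'a::field) \<Rightarrow> (nat \<Rightarrow> 'a) \<Rightarrow> 'a" where
  "coord_sum c u = (\<Sum>j\<in>{1..5}. c j * u j)"

definition LV_neutral :: "(nat \<Rightarrow> nat \<Rightarrow> 'a::field) \<Rightarrow> nat \<Rightarrow> bool" where
  "LV_neutral a p \<longleftrightarrow> (\<forall>j\<in>{1..5}. a p j = 1/2 \<and> a j p = 1/2)"

text \<open>In characteristic 2 the term 1/2 is 0, so a i i = 1/2 contradicts a i i + a i i = 1.\<close>

lemma is_LV_constants_two_nonzero: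
  assumes "is_LV_constants (a :: nat \<Rightarrow> nat \<Rightarrow> 'a::field)"
  shows "(2::'a) \<noteq> 0"
proof
  assume "(2::'a) = 0"
  moreover have "a 1 1 = 1/2 \<and> a 1 1 + a 1 1 = 1"
    using assms unfolding is_LV_constants_def
    by (meson atLeastAtMost_iff le_numeral_extra(4) one_le_numeral)
  ultimately show False by simp
qed

lemma LV_mult_commute: "LV_mult a u v = LV_mult a v u"
proof -
  have "(\<Sum>i\<in>I. \<Sum>j\<in>I. u i * v j * ((if k = i then a i j else 0) + (if k = j then a j i else 0)))
      = (\<Sum>i\<in>I. \<Sum>j\<in>I. v i * u j * ((if k = i then a i j else 0) + (if k = j then a j i else 0)))"
    for I :: "nat set" and k
    by (subst sum.swap) (simp add: ac_simps)
  then show ?thesis unfolding LV_mult_def by auto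
qed

lemma LV_mult_vscale_left: "LV_mult a (vscale c u) v = vscale c (LV_mult a u v)"
  unfolding LV_mult_def vscale_def by (auto simp: fun_eq_iff sum_distrib_left ac_simps)

lemma LV_mult_vsub_right: "LV_mult a u (vsub v w) = vsub (LV_mult a u v) (LV_mult a u w)"
  unfolding LV_mult_def vsub_def by (auto simp: fun_eq_iff right_diff_distrib left_diff_distrib sum_subtractf)

lemma LV_mult_ebasis_right:
  assumes "j \<in> {1..5}" "k \<in> {1..5}"
  shows "LV_mult a u (ebasis j) k = a k j * u k + (if k = j then coord_sum (a j) u else 0)"
proof -
  have "LV_mult a u (ebasis j) k
      = (\<Sum>i\<in>{1..5}. u i * ((if k = i then a i j else 0) + (if k = j then a j i else 0)))"
    using assms unfolding LV_mult_def ebasis_def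
    by (simp add: mult.assoc if_distrib[where f="\<lambda>x. x * _"] if_distrib[where f="\<lambda>x. _ * x"]
        cong: if_cong)
  also have "\<dots> = a k j * u k + (if k = j then coord_sum (a j) u else 0)"
    using assms unfolding coord_sum_def
    by (cases "k = j")
      (simp_all add: distrib_left sum.distrib if_distrib[where f="\<lambda>x. u _ * x"] ac_simps cong: if_cong)
  finally show ?thesis .
qed

lemma ebasis_LV_space: "j \<in> {1..5} \<Longrightarrow> ebasis j \<in> LV_space"
  unfolding LV_space_def ebasis_def by auto

lemma vscale_LV_space: "u \<in> LV_space \<Longrightarrow> vscale c u \<in> LV_space"
  unfolding LV_space_def vscale_def by auto

lemma vadd_LV_space: "u \<in> LV_space \<Longrightarrow> v \<in> LV_space \<Longrightarrow> vadd u v \<in> LV_space"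
  unfolding LV_space_def vadd_def by auto

lemma LV_mult_LV_space: "LV_mult a u v \<in> LV_space"
  unfolding LV_space_def LV_mult_def by auto

lemma LV_mult_outside: "k \<notin> {1..5} \<Longrightarrow> LV_mult a u v k = 0"
  unfolding LV_mult_def by auto

lemma coord_sum_ebasis: "i \<in> {1..5} \<Longrightarrow> coord_sum c (ebasis i) = c i"
  unfolding coord_sum_def ebasis_def by (simp add: if_distrib[where f="\<lambda>x. _ * x"] cong: if_cong)

lemma LV_mult_ebasis_ebasis:
  assumes "i \<in> {1..5}" "j \<in> {1..5}"
  shows "LV_mult a (ebasis i) (ebasis j) = vadd (vscale (a i j) (ebasis i)) (vscale (a j i) (ebasis j))"
proof
  fix k
  show "LV_mult a (ebasis i) (ebasis j) k = vadd (vscale (a i j) (ebasis i)) (vscale (a j i) (ebasis j)) k"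
  proof (cases "k \<in> {1..5}")
    case True
    then show ?thesis
      using assms by (simp add: LV_mult_ebasis_right coord_sum_ebasis) (simp add: vadd_def vscale_def ebasis_def)
  next
    case False
    then have "k \<noteq> i" "k \<noteq> j" using assms by auto
    with False show ?thesis by (simp add: LV_mult_outside vadd_def vscale_def ebasis_def)
  qed
qed

lemma LV_linear_apply:
  assumes f: "LV_linear f" and u: "u \<in> LV_space"
  shows "f u = (\<lambda>k. \<Sum>j\<in>{1..5}. u j * f (ebasis j) k)"
proof -
  let ?t = "\<lambda>j. vscale (u j) (ebasis j)"
  have t: "\<And>j. j \<in> {1..5} \<Longrightarrow> ?t j \<in> LV_space"
    by (simp add: vscale_LV_space ebasis_LV_space)
  have add: "\<And>x y. x \<in> LV_space \<Longrightarrow> y \<in> LV_space \<Longrightarrow> f (vadd x y) = vadd (f x) (f y)"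
    and scale: "\<And>c x. x \<in> LV_space \<Longrightarrow> f (vscale c x) = vscale c (f x)"
    using f unfolding LV_linear_def by auto
  have u_expand: "u = vadd (?t 1) (vadd (?t 2) (vadd (?t 3) (vadd (?t 4) (?t 5))))"
    using u unfolding LV_space_def vadd_def vscale_def ebasis_def by (auto simp: fun_eq_iff)
  have "f u = vadd (f (?t 1)) (vadd (f (?t 2)) (vadd (f (?t 3)) (vadd (f (?t 4)) (f (?t 5)))))"
    by (subst u_expand) (simp add: add vadd_LV_space t)
  also have "\<dots> = (\<lambda>k. \<Sum>j\<in>{1..5}. u j * f (ebasis j) k)"
    unfolding sum_1_5 by (simp add: scale ebasis_LV_space) (simp add: vadd_def vscale_def fun_eq_iff add.assoc)
  finally show ?thesis .
qed

lemma LV_linear_onto_line: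
  assumes "LV_linear f" "\<forall>j\<in>{1..5}. f (ebasis j) = vscale (c j) w" "u \<in> LV_space"
  shows "f u = vscale (coord_sum c u) w"
  using assms LV_linear_apply[OF assms(1,3)]
  by (simp add: coord_sum_def vscale_def fun_eq_iff sum_distrib_left ac_simps)

section \<open>Coordinate equations of a derivation\<close>

lemma LV_Der_ebasis_coord:
  assumes f: "f \<in> LV_Der a" and ijk: "i \<in> {1..5}" "j \<in> {1..5}" "k \<in> {1..5}"
  shows "a i j * f (ebasis i) k + a j i * f (ebasis j) k =
    a k j * f (ebasis i) k + a k i * f (ebasis j) k
    + (if k = j then coord_sum (a j) (f (ebasis i)) else 0)
    + (if k = i then coord_sum (a i) (f (ebasis j)) else 0)"
proof -
  have lin: "LV_linear f"
    and der: "f (LV_mult a (ebasis i) (ebasis j))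
      = vadd (LV_mult a (f (ebasis i)) (ebasis j)) (LV_mult a (ebasis i) (f (ebasis j)))"
    using f ebasis_LV_space[OF ijk(1)] ebasis_LV_space[OF ijk(2)] unfolding LV_Der_def by auto
  have "f (LV_mult a (ebasis i) (ebasis j)) = vadd (vscale (a i j) (f (ebasis i))) (vscale (a j i) (f (ebasis j)))"
    using lin ijk unfolding LV_mult_ebasis_ebasis[OF ijk(1,2)] LV_linear_def
    by (simp add: vscale_LV_space ebasis_LV_space)
  then show ?thesis
    using der ijk
    by (simp add: fun_eq_iff vadd_def vscale_def LV_mult_ebasis_right LV_mult_commute[of a "ebasis i"] ac_simps)
qed

lemma LV_Der_ebasis_coord_vanish:
  assumes a: "is_LV_constants a" and f: "f \<in> LV_Der a"
    and ik: "i \<in> {1..5}" "k \<in> {1..5}" "k \<noteq> i" and aki: "a k i \<noteq> 1/2"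
  shows "f (ebasis i) k = 0"
proof -
  have aii: "a i i + a i i = 1" using a ik unfolding is_LV_constants_def by blast
  have "(a i i + a i i) * f (ebasis i) k = (a k i + a k i) * f (ebasis i) k"
    using LV_Der_ebasis_coord[OF f ik(1,1,2)] ik(3) by (simp only: distrib_right if_False add_0_right)
  then have "(1 - (a k i + a k i)) * f (ebasis i) k = 0" by (simp add: aii algebra_simps)
  moreover have "a k i + a k i \<noteq> 1"
    using aki is_LV_constants_two_nonzero[OF a] by (auto simp: mult_2[symmetric] field_simps)
  ultimately show ?thesis by simp
qed

lemma LV_Der_ebasis_trace:
  assumes a: "is_LV_constants a" and f: "f \<in> LV_Der a" and i: "i \<in> {1..5}"
  shows "coord_sum (a i) (f (ebasis i)) = 0"
  using LV_Der_ebasis_coord[OF f i i i] is_LV_constants_two_nonzero[OF a]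
  by (simp add: mult_2[symmetric])

lemma LV_Der_ebasis_coord_diag:
  assumes a: "is_LV_constants a" and f: "f \<in> LV_Der a"
    and ij: "i \<in> {1..5}" "j \<in> {1..5}" "i \<noteq> j"
  shows "(a j i - 1/2) * f (ebasis j) i = coord_sum (a i) (f (ebasis j))"
proof -
  have aii: "a i i = 1/2" using a ij unfolding is_LV_constants_def by blast
  show ?thesis using LV_Der_ebasis_coord[OF f ij(1,2,1)] ij(3) by (simp add: aii algebra_simps)
qed

lemma LV_Der_neutral_coord_vanish:
  assumes f: "f \<in> LV_Der a" and p: "LV_neutral a p" "p \<in> {1..5}"
    and jk: "j \<in> {1..5}" "k \<in> {1..5}" "k \<noteq> p" "k \<noteq> j" and akj: "a k j \<noteq> 1/2"
  shows "f (ebasis p) k = 0"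
proof -
  have half: "a p j = 1/2" "a j p = 1/2" "a k p = 1/2" using p jk unfolding LV_neutral_def by auto
  have "(1/2 - a k j) * f (ebasis p) k = 0"
    using LV_Der_ebasis_coord[OF f p(2) jk(1,2)] jk(3,4) by (simp add: half algebra_simps)
  then show ?thesis using akj by (metis mult_eq_0_iff right_minus_eq)
qed

lemma LV_Der_neutral_coord_eq:
  assumes a: "is_LV_constants a" and f: "f \<in> LV_Der a" and p: "LV_neutral a p" "p \<in> {1..5}"
    and ij: "i \<in> {1..5}" "j \<in> {1..5}" "i \<noteq> p" "j \<noteq> p" and aij: "a i j \<noteq> 1/2"
  shows "f (ebasis i) p = f (ebasis j) p"
proof -
  have half: "a p i = 1/2" "a p j = 1/2" "a j i = 1 - a i j"
    using p ij a unfolding LV_neutral_def is_LV_constants_def by (auto simp: eq_diff_eq)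
  have "(a i j - 1/2) * (f (ebasis i) p - f (ebasis j) p) = 0"
    using LV_Der_ebasis_coord[OF f ij(1,2) p(2)] ij(3,4) is_LV_constants_two_nonzero[OF a]
    by (simp add: half field_simps)
  then show ?thesis using aij by (metis mult_eq_0_iff right_minus_eq)
qed

text \<open>Subtracting the trace identity for row j from the diagonal identity for (i, j) leaves only
  the coordinates i and j of D(e_j).\<close>

lemma LV_Der_ebasis_diag:
  assumes a: "is_LV_constants a" and f: "f \<in> LV_Der a"
    and ij: "i \<in> {1..5}" "j \<in> {1..5}" "i \<noteq> j" and aij: "a i j \<noteq> 1/2"
    and rest: "\<And>m. m \<in> {1..5} \<Longrightarrow> m \<noteq> i \<Longrightarrow> m \<noteq> j \<Longrightarrow> (a i m - a j m) * f (ebasis j) m = 0"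
  shows "f (ebasis j) j = - 2 * f (ebasis j) i"
proof -
  let ?x = "f (ebasis j)"
  have half: "a i i = 1/2" "a j j = 1/2" and aji: "a j i = 1 - a i j"
    using a ij unfolding is_LV_constants_def by (auto simp: eq_diff_eq)
  have "coord_sum (a i) ?x - coord_sum (a j) ?x = (\<Sum>m\<in>{1..5}. (a i m - a j m) * ?x m)"
    by (simp add: coord_sum_def sum_subtractf left_diff_distrib)
  also have "\<dots> = (\<Sum>m\<in>{1..5} - {i, j}. (a i m - a j m) * ?x m) + (\<Sum>m\<in>{i, j}. (a i m - a j m) * ?x m)"
    using ij by (intro sum.subset_diff) auto
  also have "(\<Sum>m\<in>{1..5} - {i, j}. (a i m - a j m) * ?x m) = 0"
    using rest by (intro sum.neutral) auto
  also have "0 + (\<Sum>m\<in>{i, j}. (a i m - a j m) * ?x m) = (1/2 - a j i) * ?x i + (a i j - 1/2) * ?x j"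
    using ij(3) by (simp add: half)
  finally have "(a j i - 1/2) * ?x i = (1/2 - a j i) * ?x i + (a i j - 1/2) * ?x j"
    using LV_Der_ebasis_coord_diag[OF a f ij] LV_Der_ebasis_trace[OF a f ij(2)] by simp
  moreover have "a j i - 1/2 = - (a i j - 1/2)" "1/2 - a j i = a i j - 1/2"
    using is_LV_constants_two_nonzero[OF a] by (simp_all add: aji field_simps)
  moreover have "- b * y = b * y + b * z \<Longrightarrow> b * (z + 2 * y) = 0" for b y z :: 'a
    by algebra
  ultimately have "(a i j - 1/2) * (?x j + 2 * ?x i) = 0" by metis
  with aij show ?thesis by (simp add: eq_neg_iff_add_eq_0)
qed



section \<open>Derivations with values on the line through e_p - e_q\<close>

lemma coord_sum_LV_mult:
  assumes balanced: "\<forall>i\<in>{1..5}. \<forall>j\<in>{1..5}. a i j * c i + a j i * c j = (c i + c j) / 2"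
  shows "coord_sum c (LV_mult a u v)
    = (coord_sum c u * coord_sum (\<lambda>_. 1) v + coord_sum (\<lambda>_. 1) u * coord_sum c v) / 2"
proof -
  let ?A = "\<lambda>k i j. (if k = i then a i j else 0) + (if k = j then a j i else 0)"
  have "coord_sum c (LV_mult a u v) = (\<Sum>k\<in>{1..5}. \<Sum>i\<in>{1..5}. \<Sum>j\<in>{1..5}. u i * v j * (c k * ?A k i j))"
    unfolding coord_sum_def LV_mult_def by (simp add: sum_distrib_left ac_simps)
  also have "\<dots> = (\<Sum>i\<in>{1..5}. \<Sum>j\<in>{1..5}. \<Sum>k\<in>{1..5}. u i * v j * (c k * ?A k i j))"
    by (rule trans[OF sum.swap], rule sum.cong[OF refl], rule sum.swap)
  also have "\<dots> = (\<Sum>i\<in>{1..5}. \<Sum>j\<in>{1..5}. u i * v j * (a i j * c i + a j i * c j))"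
    by (intro sum.cong refl)
      (simp add: sum_distrib_left[symmetric] distrib_left sum.distrib if_distrib[where f="\<lambda>x. _ * x"]
        ac_simps cong: if_cong)
  also have "\<dots> = (\<Sum>i\<in>{1..5}. \<Sum>j\<in>{1..5}. u i * v j * ((c i + c j) / 2))"
    by (intro sum.cong refl) (simp add: balanced[rule_format])
  also have "\<dots> = (coord_sum c u * coord_sum (\<lambda>_. 1) v + coord_sum (\<lambda>_. 1) u * coord_sum c v) / 2"
    unfolding coord_sum_def sum_product sum.distrib[symmetric] sum_divide_distrib
    by (intro sum.cong refl) (simp add: algebra_simps add_divide_distrib)
  finally show ?thesis .
qed

lemma coord_sum_neutral: "LV_neutral a p \<Longrightarrow> coord_sum (a p) u = coord_sum (\<lambda>_. 1) u / 2"
  unfolding LV_neutral_def coord_sum_def sum_divide_distrib by (intro sum.cong) auto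

lemma LV_mult_neutral_diff:
  assumes p: "LV_neutral a p" "p \<in> {1..5}" and q: "LV_neutral a q" "q \<in> {1..5}"
  shows "LV_mult a u (vsub (ebasis p) (ebasis q))
    = vscale (coord_sum (\<lambda>_. 1) u / 2) (vsub (ebasis p) (ebasis q))"
proof
  fix k
  show "LV_mult a u (vsub (ebasis p) (ebasis q)) k
    = vscale (coord_sum (\<lambda>_. 1) u / 2) (vsub (ebasis p) (ebasis q)) k"
  proof (cases "k \<in> {1..5}")
    case True
    then have half: "a k p = 1/2" "a k q = 1/2" using p q unfolding LV_neutral_def by auto
    have "LV_mult a u (vsub (ebasis p) (ebasis q)) k = LV_mult a u (ebasis p) k - LV_mult a u (ebasis q) k"
      unfolding LV_mult_vsub_right by (simp add: vsub_def)
    also have "\<dots> = coord_sum (\<lambda>_. 1) u / 2 * (ebasis p k - ebasis q k)"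
      using True p(2) q(2)
      by (simp add: LV_mult_ebasis_right half coord_sum_neutral[OF p(1)] coord_sum_neutral[OF q(1)])
        (simp add: ebasis_def algebra_simps)
    finally show ?thesis by (simp add: vscale_def vsub_def)
  next
    case False
    then show ?thesis using p q by (auto simp: LV_mult_outside vscale_def vsub_def ebasis_def)
  qed
qed

lemma LV_Der_line_map:
  assumes a: "is_LV_constants a"
    and p: "LV_neutral a p" "p \<in> {1..5}" and q: "LV_neutral a q" "q \<in> {1..5}"
    and c: "\<And>i j. i \<in> {1..5} \<Longrightarrow> j \<in> {1..5} \<Longrightarrow> a i j \<noteq> 1/2 \<Longrightarrow> c i = c j"
    and lin: "LV_linear f"
    and f: "\<And>u. u \<in> LV_space \<Longrightarrow> f u = vscale (coord_sum c u) (vsub (ebasis p) (ebasis q))"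
  shows "f \<in> LV_Der a"
proof -
  let ?w = "vsub (ebasis p) (ebasis q)" and ?\<sigma> = "coord_sum (\<lambda>_. 1)"
  have two: "(2::'a) \<noteq> 0" by (rule is_LV_constants_two_nonzero[OF a])
  have balanced: "\<forall>i\<in>{1..5}. \<forall>j\<in>{1..5}. a i j * c i + a j i * c j = (c i + c j) / 2"
  proof (intro ballI)
    fix i j :: nat assume ij: "i \<in> {1..5}" "j \<in> {1..5}"
    then have aji: "a j i = 1 - a i j" using a unfolding is_LV_constants_def by (auto simp: eq_diff_eq)
    show "a i j * c i + a j i * c j = (c i + c j) / 2"
    proof (cases "a i j = 1/2")
      case True
      then show ?thesis using two by (simp add: aji field_simps)
    next
      case False
      then show ?thesis using c[OF ij False] two by (simp add: aji field_simps)
    qed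
  qed
  have "f (LV_mult a u v) = vadd (LV_mult a (f u) v) (LV_mult a u (f v))"
    if "u \<in> LV_space" "v \<in> LV_space" for u v
  proof -
    have "LV_mult a (f u) v = LV_mult a (vscale (coord_sum c u) ?w) v"
      using f[OF that(1)] by simp
    also have "\<dots> = vscale (coord_sum c u) (vscale (?\<sigma> v / 2) ?w)"
      by (simp only: LV_mult_vscale_left LV_mult_commute[of a ?w v] LV_mult_neutral_diff[OF p q])
    finally have fu: "LV_mult a (f u) v = vscale (coord_sum c u) (vscale (?\<sigma> v / 2) ?w)" .
    have "LV_mult a u (f v) = LV_mult a (vscale (coord_sum c v) ?w) u"
      using f[OF that(2)] by (simp add: LV_mult_commute[of a u])
    also have "\<dots> = vscale (coord_sum c v) (vscale (?\<sigma> u / 2) ?w)"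
      by (simp only: LV_mult_vscale_left LV_mult_commute[of a ?w u] LV_mult_neutral_diff[OF p q])
    finally have fv: "LV_mult a u (f v) = vscale (coord_sum c v) (vscale (?\<sigma> u / 2) ?w)" .
    show ?thesis
      unfolding fu fv f[OF LV_mult_LV_space] coord_sum_LV_mult[OF balanced]
      by (simp add: vadd_def vscale_def fun_eq_iff algebra_simps add_divide_distrib)
  qed
  with lin show ?thesis unfolding LV_Der_def by blast
qed

lemma thm6_consts_eq_half:
  "i = j \<or> i \<notin> {1, 2, 5} \<or> j \<notin> {1, 2, 5} \<Longrightarrow> thm6_consts \<alpha> \<beta> \<gamma> i j = 1/2"
  unfolding thm6_consts_def by auto

lemma thm6_consts_swap:
  assumes "(2::'a::field) \<noteq> 0"
  shows "thm6_consts \<alpha> \<beta> \<gamma> j i = 1 - thm6_consts (\<alpha>::'a) \<beta> \<gamma> i j"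
proof (cases "i \<noteq> j \<and> i \<in> {1, 2, 5} \<and> j \<in> {1, 2, 5}")
  case True
  then show ?thesis by (elim conjE insertE emptyE) (simp_all add: thm6_consts_def)
next
  case False
  then have "thm6_consts \<alpha> \<beta> \<gamma> i j = 1/2" "thm6_consts \<alpha> \<beta> \<gamma> j i = 1/2"
    by (blast intro: thm6_consts_eq_half)+
  moreover have "1 - 1/2 = (1/2::'a)" using assms by (simp add: field_simps)
  ultimately show ?thesis by (simp only:)
qed

lemma thm6_consts_LV:
  assumes "(2::'a::field) \<noteq> 0"
  shows "is_LV_constants (thm6_consts \<alpha> \<beta> (\<gamma>::'a))"
proof (unfold is_LV_constants_def, intro ballI conjI)
  fix i j :: nat
  show "thm6_consts \<alpha> \<beta> \<gamma> i i = 1/2" by (rule thm6_consts_eq_half) simp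
  have "thm6_consts \<alpha> \<beta> \<gamma> j i = 1 - thm6_consts \<alpha> \<beta> \<gamma> i j" by (rule thm6_consts_swap[OF assms])
  then show "thm6_consts \<alpha> \<beta> \<gamma> i j + thm6_consts \<alpha> \<beta> \<gamma> j i = 1" by simp
qed

lemma thm6_consts_neutral:
  assumes "p \<in> {3, 4}"
  shows "LV_neutral (thm6_consts \<alpha> \<beta> \<gamma>) p"
  using assms unfolding LV_neutral_def by (elim insertE emptyE) (simp_all add: thm6_consts_def)

lemma thm6_consts_ne_half:
  fixes \<alpha> \<beta> \<gamma> :: "'a::field"
  assumes "(2::'a) \<noteq> 0" "\<alpha> \<noteq> 1/2" "\<beta> \<noteq> 1/2" "\<gamma> \<noteq> 1/2"
    and "i \<in> {1, 2, 5}" "j \<in> {1, 2, 5}" "i \<noteq> j"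
  shows "thm6_consts \<alpha> \<beta> \<gamma> i j \<noteq> 1/2"
proof -
  have one_minus: "1 - x \<noteq> 1/2" if "x \<noteq> 1/2" for x :: 'a
    using that assms(1) by (simp add: eq_diff_eq field_simps)
  have "thm6_consts \<alpha> \<beta> \<gamma> i j \<in> {\<alpha>, 1 - \<alpha>, \<beta>, 1 - \<beta>, \<gamma>, 1 - \<gamma>}"
    using assms(5-7) by (elim insertE emptyE) (simp_all add: thm6_consts_def)
  then show ?thesis using assms(2-4) one_minus[OF assms(2)] one_minus[OF assms(3)] one_minus[OF assms(4)] by auto
qed

lemma LV_Der_thm6_offdiag_coord_zero:
  fixes \<alpha> \<beta> \<gamma> :: "'a::field"
  assumes f: "f \<in> LV_Der (thm6_consts \<alpha> \<beta> \<gamma>)"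
    and params: "(2::'a) \<noteq> 0" "\<alpha> \<noteq> 1/2" "\<beta> \<noteq> 1/2" "\<gamma> \<noteq> 1/2"
    and j: "j \<in> {1..5}" and k: "k \<in> {1, 2, 5}" "k \<noteq> j"
  shows "f (ebasis j) k = 0"
proof -
  have k5: "k \<in> {1..5}" using k by auto
  consider "j \<in> {1, 2, 5}" | "j \<in> {3, 4}" using j unfolding atLeastAtMost_1_5 by auto
  then show ?thesis
  proof cases
    case 1
    with k have "thm6_consts \<alpha> \<beta> \<gamma> k j \<noteq> 1/2" by (intro thm6_consts_ne_half[OF params])
    then show ?thesis
      using LV_Der_ebasis_coord_vanish[OF thm6_consts_LV[OF params(1)] f j k5 k(2)] by blast
  next
    case 2
    define i :: nat where "i = (if k = 1 then 2 else 1)"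
    have i: "i \<in> {1, 2, 5}" "i \<noteq> k" "i \<noteq> j" using k 2 by (auto simp: i_def)
    then have "thm6_consts \<alpha> \<beta> \<gamma> k i \<noteq> 1/2" using k by (intro thm6_consts_ne_half[OF params]) auto
    moreover have "i \<in> {1..5}" using i by auto
    ultimately show ?thesis
      using LV_Der_neutral_coord_vanish[OF f thm6_consts_neutral[OF 2] j _ k5 k(2)] i(2) by blast
  qed
qed

lemma eq_vscale_e3_minus_e4:
  assumes "v \<in> LV_space" "v 1 = 0" "v 2 = 0" "v 5 = 0" "v 3 + v 4 = 0"
  shows "v = vscale (v 3) (vsub (ebasis 3) (ebasis 4))"
proof
  fix k
  show "v k = vscale (v 3) (vsub (ebasis 3) (ebasis 4)) k"
  proof (cases "k \<in> {1..5}")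
    case True
    then have "k = 1 \<or> k = 2 \<or> k = 3 \<or> k = 4 \<or> k = 5" unfolding atLeastAtMost_1_5 by auto
    then show ?thesis using assms(2-5)
      by (auto simp: vscale_def vsub_def ebasis_def eq_neg_iff_add_eq_0 add.commute)
  next
    case False
    then show ?thesis using assms(1) by (auto simp: LV_space_def vscale_def vsub_def ebasis_def)
  qed
qed

lemma LV_Der_thm6_ebasis_eq_vscale:
  fixes \<alpha> \<beta> \<gamma> :: "'a::field"
  assumes f: "f \<in> LV_Der (thm6_consts \<alpha> \<beta> \<gamma>)"
    and params: "(2::'a) \<noteq> 0" "\<alpha> \<noteq> 1/2" "\<beta> \<noteq> 1/2" "\<gamma> \<noteq> 1/2"
    and j: "j \<in> {1..5}"
  shows "f (ebasis j) = vscale (f (ebasis j) 3) (vsub (ebasis 3) (ebasis 4))"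
proof -
  let ?a = "thm6_consts \<alpha> \<beta> \<gamma>" and ?x = "f (ebasis j)"
  note a = thm6_consts_LV[OF params(1)]
  note offline = LV_Der_thm6_offdiag_coord_zero[OF f params]
  have zero: "?x m = 0" if m: "m \<in> {1, 2, 5}" for m
  proof (cases "m = j")
    case True
    define i :: nat where "i = (if j = 1 then 2 else 1)"
    have i: "i \<in> {1, 2, 5}" "i \<noteq> j" using m True by (auto simp: i_def)
    have rest: "(?a i m' - ?a j m') * ?x m' = 0" if "m' \<in> {1..5}" "m' \<noteq> i" "m' \<noteq> j" for m'
    proof (cases "m' \<in> {1, 2, 5}")
      case True
      then show ?thesis using offline[OF j True that(3)] by simp
    next
      case False
      then show ?thesis by (simp add: thm6_consts_eq_half)
    qed
    have "?a i j \<noteq> 1/2" using i m True by (intro thm6_consts_ne_half[OF params]) auto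
    moreover have "i \<in> {1..5}" using i by auto
    ultimately have "?x j = - 2 * ?x i" using LV_Der_ebasis_diag[OF a f _ j i(2) _ rest] by blast
    with offline[OF j i] True show ?thesis by simp
  next
    case False
    then show ?thesis using offline[OF j m] by simp
  qed
  have "coord_sum (?a j) ?x = ?a j 3 * ?x 3 + ?a j 4 * ?x 4"
    unfolding coord_sum_def sum_1_5 using zero[of 1] zero[of 2] zero[of 5] by simp
  then have "(?x 3 + ?x 4) / 2 = 0"
    using LV_Der_ebasis_trace[OF a f j] by (simp add: thm6_consts_eq_half add_divide_distrib)
  then have "?x 3 + ?x 4 = 0" using params(1) by simp
  moreover have "?x \<in> LV_space"
    using f ebasis_LV_space[OF j] unfolding LV_Der_def LV_linear_def by blast
  ultimately show ?thesis using zero by (intro eq_vscale_e3_minus_e4) auto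
qed

lemma LV_Der_thm6_onto_line:
  fixes \<alpha> \<beta> \<gamma> :: "'a::field"
  assumes f: "f \<in> LV_Der (thm6_consts \<alpha> \<beta> \<gamma>)"
    and params: "(2::'a) \<noteq> 0" "\<alpha> \<noteq> 1/2" "\<beta> \<noteq> 1/2" "\<gamma> \<noteq> 1/2"
  shows "\<forall>u\<in>LV_space. \<exists>c. f u = vscale c (vsub (ebasis 3) (ebasis 4))"
    and "f (ebasis 1) = f (ebasis 2)" "f (ebasis 2) = f (ebasis 5)"
proof -
  have lin: "LV_linear f" using f by (simp add: LV_Der_def)
  have line: "\<forall>j\<in>{1..5}. f (ebasis j) = vscale (f (ebasis j) 3) (vsub (ebasis 3) (ebasis 4))"
    using LV_Der_thm6_ebasis_eq_vscale[OF f params] by blast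
  then show "\<forall>u\<in>LV_space. \<exists>c. f u = vscale c (vsub (ebasis 3) (ebasis 4))"
    using LV_linear_onto_line[OF lin line] by blast
  have "f (ebasis i) 3 = f (ebasis j) 3" if "(i, j) \<in> {(1, 2), (2, 5)}" for i j
    using that LV_Der_neutral_coord_eq[OF thm6_consts_LV[OF params(1)] f thm6_consts_neutral, of 3 i j]
      thm6_consts_ne_half[OF params, of i j] by auto
  from this[of 1 2] this[of 2 5] show "f (ebasis 1) = f (ebasis 2)" "f (ebasis 2) = f (ebasis 5)"
    using line[rule_format, of 1] line[rule_format, of 2] line[rule_format, of 5] by simp_all
qed

lemma LV_Der_thm6_of_line:
  fixes \<alpha> \<beta> \<gamma> :: "'a::field"
  assumes two: "(2::'a) \<noteq> 0" and lin: "LV_linear f"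
    and img: "\<forall>u\<in>LV_space. \<exists>c. f u = vscale c (vsub (ebasis 3) (ebasis 4))"
    and e125: "f (ebasis 1) = f (ebasis 2)" "f (ebasis 2) = f (ebasis 5)"
  shows "f \<in> LV_Der (thm6_consts \<alpha> \<beta> \<gamma>)"
proof -
  have "\<forall>j\<in>{1..5}. f (ebasis j) = vscale (f (ebasis j) 3) (vsub (ebasis 3) (ebasis 4))"
    using img ebasis_LV_space by (fastforce simp: vscale_def vsub_def ebasis_def)
  note line = LV_linear_onto_line[OF lin this]
  have "f (ebasis i) 3 = f (ebasis j) 3" if "thm6_consts \<alpha> \<beta> \<gamma> i j \<noteq> 1/2" for i j
  proof -
    have "i \<in> {1, 2, 5}" "j \<in> {1, 2, 5}" using that thm6_consts_eq_half by blast+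
    with e125 show ?thesis by auto
  qed
  then show ?thesis
    using LV_Der_line_map[OF thm6_consts_LV[OF two] thm6_consts_neutral _ thm6_consts_neutral _ _ lin line]
    by auto
qed

theorem mainTheorem6:
  fixes \<alpha> \<beta> \<gamma> :: "'a::field"
  assumes "(2::'a) \<noteq> 0"
    and "\<alpha> \<noteq> 1/2" and "\<beta> \<noteq> 1/2" and "\<gamma> \<noteq> 1/2"
  shows "LV_Der (thm6_consts \<alpha> \<beta> \<gamma>) =
    {f. LV_linear f
        \<and> (\<forall>u\<in>LV_space. \<exists>c. f u = vscale c (vsub (ebasis 3) (ebasis 4)))
        \<and> f (ebasis 1) = f (ebasis 2) \<and> f (ebasis 2) = f (ebasis 5)}"
proof (intro set_eqI iffI)
  fix f :: "(nat \<Rightarrow> 'a) \<Rightarrow> nat \<Rightarrow> 'a"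
  show "f \<in> {f. LV_linear f \<and> (\<forall>u\<in>LV_space. \<exists>c. f u = vscale c (vsub (ebasis 3) (ebasis 4)))
      \<and> f (ebasis 1) = f (ebasis 2) \<and> f (ebasis 2) = f (ebasis 5)}"
    if "f \<in> LV_Der (thm6_consts \<alpha> \<beta> \<gamma>)"
    using that LV_Der_thm6_onto_line[OF that assms] by (simp add: LV_Der_def)
  show "f \<in> LV_Der (thm6_consts \<alpha> \<beta> \<gamma>)"
    if "f \<in> {f. LV_linear f \<and> (\<forall>u\<in>LV_space. \<exists>c. f u = vscale c (vsub (ebasis 3) (ebasis 4)))
      \<and> f (ebasis 1) = f (ebasis 2) \<and> f (ebasis 2) = f (ebasis 5)}"
    using that LV_Der_thm6_of_line[OF assms(1)] by blast
qed

end
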